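(* Let $\mathbb{X}$ be a finite set, let $\mathcal{H}_A$ be a finite-dimensional Hilbert space, and let $\{\rho_A^x\}_{x\in\mathbb{X}}$ be density operators on $\mathcal{H}_A$ (the quantum encoding of a discrete random variable $X$ with probability mass function $p_X$ satisfying $p_X(x)>0$ for all $x\in\mathbb{X}$). Then \[ \mathcal{Q}(X\rightarrow A)_{\rho_A}\leq \min_{\pi\in\Delta(\mathbb{X})}\max_{x\in\mathbb{X}}\widetilde{D}_\infty\Big(\rho_A^x\,\Big\|\,\sum_{x'\in\mathbb{X}}\pi(x')\rho_A^{x'}\Big). \]
   Context: All logarithms are base 2. $\Delta(\mathbb{X})$ is the set of probability mass functions on $\mathbb{X}$. For a density operator $\rho$ and a positive semi-definite operator $\sigma$, $\widetilde{D}_\infty(\rho\|\sigma)=\log\big(\inf\{\mu\in\mathbb{R}:\rho\leq\mu\sigma\}\big)$ (operator inequality), with $\widetilde{D}_\infty(\rho\|\sigma)=+\infty$ if the support of $\rho$ is not contained in the support of $\sigma$. The maximal quantum leakage is \[ \mathcal{Q}(X\rightarrow A)_{\rho_A}=\sup_{\{F_y\}_{y\in\mathbb{Y}}}\log\Big(\sum_{y\in\mathbb{Y}}\max_{x\in\mathbb{X}}\operatorname{tr}(\rho_A^xF_y)\Big), \] where the supremum is over all POVMs $\{F_y\}_{y\in\mathbb{Y}}$ on $\mathcal{H}_A$ (positive semi-definite operators summing to the identity) with arbitrary finite outcome set $\mathbb{Y}$. *)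

theory Defs
  imports "HOL-Analysis.Analysis" "HOL-Library.Extended_Real" "Jordan_Normal_Form.Matrix"
begin

text \<open>Operators on the finite-dimensional Hilbert space H_A = C^d are d x d complex matrices.\<close>

definition mat_trace :: "complex mat \<Rightarrow> complex" where
  "mat_trace A = (\<Sum>i<dim_row A. A $$ (i, i))"

definition psd :: "nat \<Rightarrow> complex mat \<Rightarrow> bool" where
  "psd d A \<longleftrightarrow> A \<in> carrier_mat d d
     \<and> (\<forall>i<d. \<forall>j<d. A $$ (i, j) = cnj (A $$ (j, i)))
     \<and> (\<forall>v \<in> carrier_vec d. Im ((A *\<^sub>v v) \<bullet>c v) = 0 \<and> Re ((A *\<^sub>v v) \<bullet>c v) \<ge> 0)"

definition density_op :: "nat \<Rightarrow> complex mat \<Rightarrow> bool" where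
  "density_op d \<rho> \<longleftrightarrow> psd d \<rho> \<and> mat_trace \<rho> = 1"

definition op_le :: "nat \<Rightarrow> complex mat \<Rightarrow> complex mat \<Rightarrow> bool" where
  "op_le d A B \<longleftrightarrow> A \<in> carrier_mat d d \<and> B \<in> carrier_mat d d \<and> psd d (B - A)"

text \<open>supp(rho) \<subseteq> supp(sigma), for PSD operators equivalently ker(sigma) \<subseteq> ker(rho).\<close>
definition supp_subset :: "nat \<Rightarrow> complex mat \<Rightarrow> complex mat \<Rightarrow> bool" where
  "supp_subset d \<rho> \<sigma> \<longleftrightarrow> (\<forall>v \<in> carrier_vec d. \<sigma> *\<^sub>v v = 0\<^sub>v d \<longrightarrow> \<rho> *\<^sub>v v = 0\<^sub>v d)"

definition D_max :: "nat \<Rightarrow> complex mat \<Rightarrow> complex mat \<Rightarrow> ereal" where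
  "D_max d \<rho> \<sigma> =
     (if supp_subset d \<rho> \<sigma>
      then ereal (log 2 (Inf {\<mu>::real. op_le d \<rho> (complex_of_real \<mu> \<cdot>\<^sub>m \<sigma>)}))
      else \<infinity>)"

definition povm :: "nat \<Rightarrow> nat set \<Rightarrow> (nat \<Rightarrow> complex mat) \<Rightarrow> bool" where
  "povm d Y F \<longleftrightarrow> finite Y \<and> (\<forall>y\<in>Y. psd d (F y))
     \<and> (\<forall>i<d. \<forall>j<d. (\<Sum>y\<in>Y. F y $$ (i, j)) = (if i = j then 1 else 0))"

definition max_quantum_leakage ::
  "nat \<Rightarrow> 'x set \<Rightarrow> ('x \<Rightarrow> complex mat) \<Rightarrow> ereal" where
  "max_quantum_leakage d X \<rho> =
     (SUP YF \<in> {(Y, F). povm d Y F}.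
        ereal (log 2 (\<Sum>y\<in>fst YF. Max ((\<lambda>x. Re (mat_trace (\<rho> x * snd YF y))) ` X))))"

definition pmfs_on :: "'x set \<Rightarrow> ('x \<Rightarrow> real) set" where
  "pmfs_on X = {\<pi>. (\<forall>x\<in>X. \<pi> x \<ge> 0) \<and> (\<Sum>x\<in>X. \<pi> x) = 1}"

definition mixture :: "nat \<Rightarrow> 'x set \<Rightarrow> ('x \<Rightarrow> real) \<Rightarrow> ('x \<Rightarrow> complex mat) \<Rightarrow> complex mat" where
  "mixture d X \<pi> \<rho> = mat d d (\<lambda>(i, j). \<Sum>x'\<in>X. complex_of_real (\<pi> x') * \<rho> x' $$ (i, j))"

end

theory Submission
  imports Defs
begin

text \<open>Fix \<open>\<pi>\<close> and put \<open>\<sigma> = \<Sum>\<^sub>x \<pi>(x) \<rho>\<^sup>x\<close>. If some \<open>supp \<rho>\<^sup>x\<close> is not contained in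
  \<open>supp \<sigma>\<close>, the right-hand side is \<open>\<infinity>\<close>. Otherwise the set of \<open>\<mu>\<close> with \<open>\<rho>\<^sup>x \<le> \<mu> \<sigma>\<close> is
  nonempty, and since \<open>tr (P F) \<ge> 0\<close> for positive semidefinite \<open>P\<close> and \<open>F\<close>, every such \<open>\<mu>\<close>,
  hence also their infimum \<open>c\<^sub>x = 2^D\<^sub>\<infinity>(\<rho>\<^sup>x\<parallel>\<sigma>)\<close>, satisfies \<open>tr (\<rho>\<^sup>x F) \<le> c\<^sub>x tr (\<sigma> F)\<close>
  for every effect \<open>F\<close>. For a POVM \<open>{F\<^sub>y}\<close> this gives
  \<open>\<Sum>\<^sub>y max\<^sub>x tr (\<rho>\<^sup>x F\<^sub>y) \<le> max\<^sub>x c\<^sub>x \<Sum>\<^sub>y tr (\<sigma> F\<^sub>y) = max\<^sub>x c\<^sub>x\<close>.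

  Both matrix facts used here, \<open>tr (P F) \<ge> 0\<close> and the existence of \<open>\<mu>\<close> with \<open>\<rho> \<le> \<mu> \<sigma>\<close>
  when \<open>ker \<sigma> \<subseteq> ker \<rho>\<close>, are proved by induction along symmetric Gaussian elimination:
  a positive semidefinite \<open>F\<close> with pivot \<open>F\<^sub>i\<^sub>i > 0\<close> is its Schur complement plus the rank-one
  matrix \<open>F\<^sub>\<bullet>\<^sub>i F\<^sub>i\<^sub>\<bullet> / F\<^sub>i\<^sub>i\<close>, and the Schur complement is again positive semidefinite with
  fewer nonzero columns.\<close>

type_synonym fun_mat = "nat \<Rightarrow> nat \<Rightarrow> complex"
type_synonym fun_vec = "nat \<Rightarrow> complex"

section \<open>Hermitian forms on \<open>\<complex>\<^sup>d\<close>\<close>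

definition sesq :: "nat \<Rightarrow> fun_mat \<Rightarrow> fun_vec \<Rightarrow> fun_vec \<Rightarrow> complex"
  where "sesq d A u w = (\<Sum>i<d. \<Sum>j<d. cnj (u i) * A i j * w j)"

abbreviation quad :: "nat \<Rightarrow> fun_mat \<Rightarrow> fun_vec \<Rightarrow> complex"
  where "quad d A u \<equiv> sesq d A u u"

definition hermitian_fun :: "nat \<Rightarrow> fun_mat \<Rightarrow> bool"
  where "hermitian_fun d A \<longleftrightarrow> (\<forall>i<d. \<forall>j<d. A i j = cnj (A j i))"

definition psd_fun :: "nat \<Rightarrow> fun_mat \<Rightarrow> bool"
  where "psd_fun d A \<longleftrightarrow> hermitian_fun d A \<and> (\<forall>u. 0 \<le> Re (quad d A u))"

definition basis_fun :: "nat \<Rightarrow> fun_vec"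
  where "basis_fun i = (\<lambda>k. if k = i then 1 else 0)"

lemma hermitian_funD: "hermitian_fun d A \<Longrightarrow> i < d \<Longrightarrow> j < d \<Longrightarrow> cnj (A i j) = A j i"
  unfolding hermitian_fun_def by (metis complex_cnj_cnj)

lemma hermitian_fun_diag: "hermitian_fun d A \<Longrightarrow> i < d \<Longrightarrow> A i i = of_real (Re (A i i))"
  using hermitian_funD[of d A i i] by (simp add: complex_eq_iff)

lemma psd_funD:
  "psd_fun d A \<Longrightarrow> hermitian_fun d A"
  "psd_fun d A \<Longrightarrow> 0 \<le> Re (quad d A u)"
  unfolding psd_fun_def by auto

lemma sesq_cong:
  "(\<And>i j. i < d \<Longrightarrow> j < d \<Longrightarrow> A i j = B i j) \<Longrightarrow> (\<And>i. i < d \<Longrightarrow> u i = u' i)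
    \<Longrightarrow> (\<And>j. j < d \<Longrightarrow> w j = w' j) \<Longrightarrow> sesq d A u w = sesq d B u' w'"
  unfolding sesq_def by (auto intro!: sum.cong)

lemma cnj_sesq:
  assumes "hermitian_fun d A"
  shows "cnj (sesq d A u w) = sesq d A w u"
proof -
  have "cnj (sesq d A u w) = (\<Sum>i<d. \<Sum>j<d. u i * A j i * cnj (w j))"
    using assms by (auto simp: sesq_def hermitian_funD intro!: sum.cong)
  also have "\<dots> = sesq d A w u"
    unfolding sesq_def by (subst sum.swap) (simp add: mult_ac)
  finally show ?thesis .
qed

lemma Im_quad: "hermitian_fun d A \<Longrightarrow> Im (quad d A u) = 0"
  using cnj_sesq[of d A u u] by (simp add: complex_eq_iff)

lemma quad_add_scale:
  "quad d A (\<lambda>k. u k + z * w k)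
     = quad d A u + z * sesq d A u w + cnj z * sesq d A w u + cnj z * z * quad d A w"
  by (simp add: sesq_def algebra_simps sum.distrib sum_distrib_left)

lemma mult_cnj_eq_cmod_square: "z * cnj z = (complex_of_real (cmod z))\<^sup>2"
  by (metis complex_norm_square of_real_power)

lemma Re_quad_add_scale:
  assumes "hermitian_fun d A"
  shows "Re (quad d A (\<lambda>k. u k + z * w k))
     = Re (quad d A u) + 2 * Re (z * sesq d A u w) + (cmod z)\<^sup>2 * Re (quad d A w)"
proof -
  have "Re (cnj z * sesq d A w u) = Re (z * sesq d A u w)"
    unfolding cnj_sesq[OF assms, of u w, symmetric] by (simp only: complex_cnj_mult[symmetric]) simp
  moreover have "cnj z * z = complex_of_real ((cmod z)\<^sup>2)"
    by (simp add: mult_cnj_eq_cmod_square mult.commute)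
  ultimately show ?thesis
    unfolding quad_add_scale by simp
qed

lemma psd_fun_sesq_eq_0:
  assumes "psd_fun d A" "Re (quad d A w) = 0"
  shows "sesq d A u w = 0"
proof (rule ccontr)
  assume "sesq d A u w \<noteq> 0"
  define b where "b = sesq d A u w"
  \<comment> \<open>The form vanishes on \<open>w\<close>, so along \<open>u - t cnj b w\<close> it is affine in \<open>t\<close> with
    slope \<open>-2 |b|\<^sup>2\<close>; this \<open>t\<close> makes it negative.\<close>
  define t where "t = (\<bar>Re (quad d A u)\<bar> + 1) / (2 * (cmod b)\<^sup>2)"
  have "cmod b > 0" using \<open>sesq d A u w \<noteq> 0\<close> b_def by simp
  have "0 \<le> Re (quad d A (\<lambda>k. u k + (- of_real t * cnj b) * w k))"
    using assms(1) by (rule psd_funD)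
  also have "\<dots> = Re (quad d A u) + 2 * Re (- of_real t * cnj b * b)"
    unfolding Re_quad_add_scale[OF psd_funD(1)[OF assms(1)]] using assms(2) by (simp add: b_def)
  also have "- of_real t * cnj b * b = - of_real (t * (cmod b)\<^sup>2)"
    by (simp add: mult_cnj_eq_cmod_square mult.commute mult.left_commute)
  also have "t * (cmod b)\<^sup>2 = (\<bar>Re (quad d A u)\<bar> + 1) / 2"
    unfolding t_def using \<open>cmod b > 0\<close> by simp
  finally show False by simp
qed

lemma psd_fun_quad_add_scale_le:
  assumes "psd_fun d A"
  shows "Re (quad d A (\<lambda>k. u k + z * v k)) \<le> 2 * Re (quad d A u) + 2 * (cmod z)\<^sup>2 * Re (quad d A v)"
proof -
  have "0 \<le> Re (quad d A (\<lambda>k. u k + (- z) * v k))"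
    using assms by (rule psd_funD)
  then show ?thesis
    unfolding Re_quad_add_scale[OF psd_funD(1)[OF assms]]
    by (simp only: mult_minus_left uminus_complex.sel norm_minus_cancel)
qed

lemma sesq_basis_fun_left: "i < d \<Longrightarrow> sesq d A (basis_fun i) w = (\<Sum>j<d. A i j * w j)"
  unfolding sesq_def basis_fun_def
  by (subst sum.swap) (simp add: if_distrib[of cnj] if_distrib[of "\<lambda>x. x * _"] cong: if_cong)

lemma sesq_basis_fun_right: "i < d \<Longrightarrow> sesq d A u (basis_fun i) = (\<Sum>k<d. cnj (u k) * A k i)"
  by (simp add: sesq_def basis_fun_def if_distrib[of "\<lambda>x. _ * x"] cong: if_cong)

lemma sesq_basis_fun: "k < d \<Longrightarrow> i < d \<Longrightarrow> sesq d A (basis_fun k) (basis_fun i) = A k i"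
  using sesq_basis_fun_left[of k d A "basis_fun i"]
  by (simp add: basis_fun_def if_distrib[of "\<lambda>x. _ * x"] cong: if_cong)

lemma psd_fun_diag_nonneg: "psd_fun d A \<Longrightarrow> i < d \<Longrightarrow> 0 \<le> Re (A i i)"
  by (metis psd_funD(2) sesq_basis_fun)

lemma psd_fun_diag_eq_0:
  assumes "psd_fun d A" "i < d" "A i i = 0" "k < d"
  shows "A k i = 0"
  using psd_fun_sesq_eq_0[OF assms(1), of "basis_fun i" "basis_fun k"] assms(2-)
  by (simp add: sesq_basis_fun)

section \<open>Symmetric Gaussian elimination\<close>

definition schur_compl :: "fun_mat \<Rightarrow> nat \<Rightarrow> fun_mat"
  where "schur_compl F i = (\<lambda>k j. F k j - F k i * F i j / F i i)"

text \<open>\<open>pivot_proj d F i u\<close> is \<open>u\<close> minus the multiple of the \<open>i\<close>-th basis vector that kills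
  the \<open>i\<close>-th entry of \<open>F u\<close>; the Schur complement is the form \<open>F\<close> pulled back along it.\<close>
definition pivot_proj :: "nat \<Rightarrow> fun_mat \<Rightarrow> nat \<Rightarrow> fun_vec \<Rightarrow> fun_vec"
  where "pivot_proj d F i u = (\<lambda>k. u k - sesq d F (basis_fun i) u / F i i * basis_fun i k)"

lemma pivot_proj_add_scale:
  "pivot_proj d F i (\<lambda>k. u k + z * v k) = (\<lambda>k. pivot_proj d F i u k + z * pivot_proj d F i v k)"
  by (simp add: pivot_proj_def sesq_def algebra_simps sum.distrib sum_distrib_left
      add_divide_distrib)

lemma quad_schur_compl_eq:
  assumes "i < d"
  shows "quad d (schur_compl F i) u
    = quad d F u - sesq d F u (basis_fun i) * sesq d F (basis_fun i) u / F i i"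
  unfolding sesq_basis_fun_left[OF assms] sesq_basis_fun_right[OF assms]
  by (simp add: sesq_def schur_compl_def algebra_simps sum_subtractf sum_distrib_left
      sum_distrib_right sum_divide_distrib)

lemma quad_schur_compl:
  assumes "hermitian_fun d F" "i < d" "F i i \<noteq> 0"
  shows "quad d (schur_compl F i) u = quad d F (pivot_proj d F i u)"
proof -
  define s where "s = sesq d F (basis_fun i) u"
  have cnj_s: "sesq d F u (basis_fun i) = cnj s"
    unfolding s_def cnj_sesq[OF assms(1)] ..
  have real: "cnj (F i i) = F i i"
    using hermitian_funD[OF assms(1,2,2)] .
  have "quad d (schur_compl F i) u = quad d F (\<lambda>k. u k + (- s / F i i) * basis_fun i k)"
    unfolding quad_schur_compl_eq[OF assms(2)] quad_add_scale cnj_s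
      sesq_basis_fun[OF assms(2,2)] s_def[symmetric]
    using assms(3) real by (simp add: field_simps)
  also have "\<dots> = quad d F (pivot_proj d F i u)"
    unfolding pivot_proj_def s_def by (simp add: algebra_simps)
  finally show ?thesis .
qed

lemma Re_quad_pivot_proj:
  assumes "hermitian_fun d F" "i < d" "F i i \<noteq> 0"
  shows "Re (quad d F (pivot_proj d F i u))
    = Re (quad d F u) - (cmod (sesq d F (basis_fun i) u))\<^sup>2 / Re (F i i)"
proof -
  define s where "s = sesq d F (basis_fun i) u"
  have "quad d F (pivot_proj d F i u) = quad d F u - cnj s * s / F i i"
    unfolding quad_schur_compl[OF assms, symmetric] quad_schur_compl_eq[OF assms(2)] s_def
      cnj_sesq[OF assms(1)] ..
  also have "cnj s * s / F i i = of_real ((cmod s)\<^sup>2 / Re (F i i))"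
    by (subst hermitian_fun_diag[OF assms(1,2)]) (simp add: mult_cnj_eq_cmod_square mult.commute)
  finally show ?thesis
    by (simp add: s_def)
qed

lemma psd_fun_schur_compl:
  assumes "psd_fun d F" "i < d" "F i i \<noteq> 0"
  shows "psd_fun d (schur_compl F i)"
proof -
  have herm: "hermitian_fun d F"
    using assms(1) by (rule psd_funD)
  have "hermitian_fun d (schur_compl F i)"
    unfolding hermitian_fun_def schur_compl_def
    using hermitian_funD[OF herm] hermitian_funD[OF herm assms(2,2)] assms(2) by simp
  then show ?thesis
    unfolding psd_fun_def quad_schur_compl[OF herm assms(2,3)]
    using psd_funD(2)[OF assms(1)] by simp
qed

definition nonzero_cols :: "nat \<Rightarrow> fun_mat \<Rightarrow> nat set"
  where "nonzero_cols d F = {j. j < d \<and> (\<exists>k<d. F k j \<noteq> 0)}"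

lemma card_nonzero_cols_schur_compl:
  assumes "i < d" "F i i \<noteq> 0"
  shows "card (nonzero_cols d (schur_compl F i)) < card (nonzero_cols d F)"
proof (rule psubset_card_mono)
  have "nonzero_cols d (schur_compl F i) \<subseteq> nonzero_cols d F - {i}"
    using assms by (auto simp: nonzero_cols_def schur_compl_def) (metis div_0 mult_zero_right)
  moreover have "i \<in> nonzero_cols d F"
    using assms by (auto simp: nonzero_cols_def)
  ultimately show "nonzero_cols d (schur_compl F i) \<subset> nonzero_cols d F"
    by blast
qed (simp add: nonzero_cols_def)

text \<open>Terminates because every pivot step clears a nonzero column.\<close>
lemma psd_fun_induct[consumes 1, case_names zero pivot]:
  assumes "psd_fun d F"
    and zero: "\<And>F. (\<And>k j. k < d \<Longrightarrow> j < d \<Longrightarrow> F k j = 0) \<Longrightarrow> P F"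
    and pivot: "\<And>F i. psd_fun d F \<Longrightarrow> i < d \<Longrightarrow> 0 < Re (F i i) \<Longrightarrow> P (schur_compl F i) \<Longrightarrow> P F"
  shows "P F"
  using assms(1)
proof (induction "card (nonzero_cols d F)" arbitrary: F rule: less_induct)
  case less
  show ?case
  proof (cases "nonzero_cols d F = {}")
    case True
    then show ?thesis
      by (intro zero) (auto simp: nonzero_cols_def)
  next
    case False
    then obtain k j where "k < d" "j < d" "F k j \<noteq> 0"
      by (auto simp: nonzero_cols_def)
    then have "F j j \<noteq> 0"
      using psd_fun_diag_eq_0[OF less.prems] by blast
    then have "0 < Re (F j j)"
      using psd_fun_diag_nonneg[OF less.prems \<open>j < d\<close>]
        hermitian_fun_diag[OF psd_funD(1)[OF less.prems] \<open>j < d\<close>]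
      by (metis less_eq_real_def of_real_0)
    show ?thesis
    proof (rule pivot[OF less.prems \<open>j < d\<close> \<open>0 < Re (F j j)\<close>])
      show "P (schur_compl F j)"
        using less.hyps card_nonzero_cols_schur_compl psd_fun_schur_compl less.prems
          \<open>j < d\<close> \<open>F j j \<noteq> 0\<close> by blast
    qed
  qed
qed

lemma psd_fun_trace_prod_nonneg:
  assumes "psd_fun d P" "psd_fun d F"
  shows "0 \<le> Re (\<Sum>a<d. \<Sum>b<d. P a b * F b a)"
  using assms(2)
proof (induction F rule: psd_fun_induct)
  case (zero F)
  then show ?case by simp
next
  case (pivot F i)
  have herm: "hermitian_fun d F"
    using pivot.hyps(1) by (rule psd_funD)
  have "F i i \<noteq> 0"
    using pivot.hyps(3) by auto
  \<comment> \<open>\<open>F\<close> is its Schur complement plus a rank-one term, whose trace against \<open>P\<close>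
    is a value of the quadratic form of \<open>P\<close>.\<close>
  have "(\<Sum>a<d. \<Sum>b<d. P a b * F b a)
      = (\<Sum>a<d. \<Sum>b<d. P a b * schur_compl F i b a + cnj (F a i) * P a b * F b i / F i i)"
    using \<open>F i i \<noteq> 0\<close> hermitian_funD[OF herm _ pivot.hyps(2)]
    by (intro sum.cong refl) (simp add: schur_compl_def field_simps)
  also have "\<dots> = (\<Sum>a<d. \<Sum>b<d. P a b * schur_compl F i b a) + quad d P (\<lambda>b. F b i) / F i i"
    by (simp add: sesq_def sum.distrib sum_divide_distrib)
  finally have "Re (\<Sum>a<d. \<Sum>b<d. P a b * F b a)
      = Re (\<Sum>a<d. \<Sum>b<d. P a b * schur_compl F i b a) + Re (quad d P (\<lambda>b. F b i)) / Re (F i i)"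
    by (subst (asm) hermitian_fun_diag[OF herm pivot.hyps(2)]) simp
  moreover have "0 \<le> Re (quad d P (\<lambda>b. F b i)) / Re (F i i)"
    using psd_funD(2)[OF assms(1)] pivot.hyps(3) by simp
  ultimately show ?case
    using pivot.IH by linarith
qed

lemma dominates_of_dominates_schur_compl:
  fixes q :: "fun_vec \<Rightarrow> real"
  assumes "psd_fun d S" "i < d" "0 < Re (S i i)"
    and q_add: "\<And>u v z. q (\<lambda>k. u k + z * v k) \<le> 2 * q u + 2 * (cmod z)\<^sup>2 * q v"
    and \<mu>': "\<And>u. q (pivot_proj d S i u) \<le> \<mu>' * Re (quad d (schur_compl S i) u)"
  shows "q u \<le> max (2 * \<mu>') (2 * q (basis_fun i) / Re (S i i)) * Re (quad d S u)"
proof -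
  have herm: "hermitian_fun d S"
    using assms(1) by (rule psd_funD)
  have "S i i \<noteq> 0"
    using assms(3) by auto
  let ?proj = "pivot_proj d S i"
  define a where "a = Re (S i i)"
  define \<mu> where "\<mu> = max (2 * \<mu>') (2 * q (basis_fun i) / a)"
  define s where "s = sesq d S (basis_fun i) u"
  define B where "B = (cmod s)\<^sup>2 / a"
  have split: "Re (quad d S u) = Re (quad d S (?proj u)) + B"
    using Re_quad_pivot_proj[OF herm assms(2) \<open>S i i \<noteq> 0\<close>] by (simp add: B_def s_def a_def)
  have "0 \<le> Re (quad d S (?proj u))" "0 \<le> B"
    using psd_funD(2)[OF assms(1)] assms(3) by (auto simp: B_def a_def)
  have "cmod (S i i) = a"
    using hermitian_fun_diag[OF herm assms(2)] assms(3) unfolding a_def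
    by (metis abs_of_pos norm_of_real)
  have "u = (\<lambda>k. ?proj u k + (s / S i i) * basis_fun i k)"
    by (simp add: pivot_proj_def s_def)
  then have "q u \<le> 2 * q (?proj u) + 2 * (cmod (s / S i i))\<^sup>2 * q (basis_fun i)"
    using q_add by metis
  also have "\<dots> = 2 * q (?proj u) + (2 * q (basis_fun i) / a) * B"
    using \<open>cmod (S i i) = a\<close> by (simp add: B_def norm_divide power_divide power2_eq_square)
  also have "\<dots> \<le> 2 * \<mu>' * Re (quad d S (?proj u)) + (2 * q (basis_fun i) / a) * B"
    using \<mu>' quad_schur_compl[OF herm assms(2) \<open>S i i \<noteq> 0\<close>] by simp
  also have "\<dots> \<le> \<mu> * Re (quad d S (?proj u)) + \<mu> * B"
    unfolding \<mu>_def using \<open>0 \<le> Re (quad d S (?proj u))\<close> \<open>0 \<le> B\<close>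
    by (intro add_mono mult_right_mono) auto
  also have "\<dots> = \<mu> * Re (quad d S u)"
    unfolding split by (simp add: distrib_left)
  finally show ?thesis
    unfolding \<mu>_def a_def .
qed

text \<open>An abstract \<open>q\<close> rather than a second matrix, so that the induction hypothesis can be
  applied to \<open>q\<close> pulled back along \<open>pivot_proj\<close>.\<close>
lemma psd_fun_dominates:
  fixes q :: "fun_vec \<Rightarrow> real"
  assumes "psd_fun d S"
    and "\<And>u v z. q (\<lambda>k. u k + z * v k) \<le> 2 * q u + 2 * (cmod z)\<^sup>2 * q v"
    and "\<And>u. Re (quad d S u) = 0 \<Longrightarrow> q u = 0"
  shows "\<exists>\<mu>. \<forall>u. q u \<le> \<mu> * Re (quad d S u)"
  using assms
proof (induction S arbitrary: q rule: psd_fun_induct)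
  case (zero S)
  then have "q u \<le> 0 * Re (quad d S u)" for u
    by (simp add: sesq_def)
  then show ?case by blast
next
  case (pivot S i)
  have herm: "hermitian_fun d S"
    using pivot.hyps(1) by (rule psd_funD)
  have "S i i \<noteq> 0"
    using pivot.hyps(3) by auto
  let ?proj = "pivot_proj d S i"
  have "\<exists>\<mu>'. \<forall>u. q (?proj u) \<le> \<mu>' * Re (quad d (schur_compl S i) u)"
  proof (rule pivot.IH)
    show "q (?proj (\<lambda>k. u k + z * v k)) \<le> 2 * q (?proj u) + 2 * (cmod z)\<^sup>2 * q (?proj v)"
      for u v z
      unfolding pivot_proj_add_scale by (rule pivot.prems(1))
    show "q (?proj u) = 0" if "Re (quad d (schur_compl S i) u) = 0" for u
      using that pivot.prems(2) quad_schur_compl[OF herm pivot.hyps(2) \<open>S i i \<noteq> 0\<close>] by simp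
  qed
  then obtain \<mu>' where \<mu>': "\<And>u. q (?proj u) \<le> \<mu>' * Re (quad d (schur_compl S i) u)"
    by blast
  have "q u \<le> max (2 * \<mu>') (2 * q (basis_fun i) / Re (S i i)) * Re (quad d S u)" for u
  proof (rule dominates_of_dominates_schur_compl[OF pivot.hyps])
    show "q (\<lambda>k. u k + z * v k) \<le> 2 * q u + 2 * (cmod z)\<^sup>2 * q v" for u v z
      by (rule pivot.prems(1))
    show "q (?proj u) \<le> \<mu>' * Re (quad d (schur_compl S i) u)" for u
      by (rule \<mu>')
  qed
  then show ?case by blast
qed

section \<open>Positive semidefinite matrices\<close>

definition entries :: "complex mat \<Rightarrow> fun_mat"
  where "entries A = (\<lambda>i j. A $$ (i, j))"

lemma mult_mat_vec_index_sesq: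
  assumes "A \<in> carrier_mat d d" "v \<in> carrier_vec d" "k < d"
  shows "(A *\<^sub>v v) $ k = sesq d (entries A) (basis_fun k) (vec_index v)"
  using assms by (auto simp: sesq_basis_fun_left entries_def scalar_prod_def lessThan_atLeast0
      intro!: sum.cong)

lemma cscalar_prod_mult_mat_vec:
  assumes "A \<in> carrier_mat d d" "v \<in> carrier_vec d"
  shows "(A *\<^sub>v v) \<bullet>c v = quad d (entries A) (vec_index v)"
proof -
  have "(A *\<^sub>v v) \<bullet>c v = (\<Sum>k<d. (A *\<^sub>v v) $ k * cnj (v $ k))"
    using assms by (auto simp: scalar_prod_def lessThan_atLeast0 intro!: sum.cong)
  also have "\<dots> = (\<Sum>k<d. (\<Sum>j<d. A $$ (k, j) * v $ j) * cnj (v $ k))"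
    using assms by (auto simp: scalar_prod_def lessThan_atLeast0 intro!: sum.cong)
  also have "\<dots> = quad d (entries A) (vec_index v)"
    unfolding sesq_def entries_def by (simp add: sum_distrib_left sum_distrib_right mult_ac)
  finally show ?thesis .
qed

lemma sesq_vec_index_vec:
  "sesq d A (vec_index (vec d u)) w = sesq d A u w"
  "sesq d A u (vec_index (vec d w)) = sesq d A u w"
  by (rule sesq_cong; simp)+

lemma psd_iff_psd_fun: "psd d A \<longleftrightarrow> A \<in> carrier_mat d d \<and> psd_fun d (entries A)"
proof
  assume A: "psd d A"
  then have carrier: "A \<in> carrier_mat d d"
    and herm: "\<forall>i<d. \<forall>j<d. A $$ (i, j) = cnj (A $$ (j, i))"
    and nonneg: "\<And>v. v \<in> carrier_vec d \<Longrightarrow> 0 \<le> Re ((A *\<^sub>v v) \<bullet>c v)"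
    unfolding psd_def by blast+
  have "0 \<le> Re (quad d (entries A) u)" for u
    using nonneg[of "vec d u"] cscalar_prod_mult_mat_vec[OF carrier, of "vec d u"]
    by (simp add: sesq_vec_index_vec)
  then show "A \<in> carrier_mat d d \<and> psd_fun d (entries A)"
    using carrier herm unfolding psd_fun_def hermitian_fun_def entries_def by blast
next
  assume "A \<in> carrier_mat d d \<and> psd_fun d (entries A)"
  then have carrier: "A \<in> carrier_mat d d" and psd: "psd_fun d (entries A)"
    by blast+
  have "\<forall>i<d. \<forall>j<d. A $$ (i, j) = cnj (A $$ (j, i))"
    using psd_funD(1)[OF psd] unfolding hermitian_fun_def entries_def .
  moreover have "Im ((A *\<^sub>v v) \<bullet>c v) = 0 \<and> 0 \<le> Re ((A *\<^sub>v v) \<bullet>c v)"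
    if "v \<in> carrier_vec d" for v
    unfolding cscalar_prod_mult_mat_vec[OF carrier that]
    using Im_quad[OF psd_funD(1)[OF psd]] psd_funD(2)[OF psd] by blast
  ultimately show "psd d A"
    unfolding psd_def using carrier by blast
qed

lemma mat_trace_mult:
  assumes "A \<in> carrier_mat d d" "B \<in> carrier_mat d d"
  shows "mat_trace (A * B) = (\<Sum>a<d. \<Sum>b<d. A $$ (a, b) * B $$ (b, a))"
  using assms by (auto simp: mat_trace_def scalar_prod_def lessThan_atLeast0 intro!: sum.cong)

lemma trace_mult_psd_nonneg:
  assumes "psd d P" "psd d F"
  shows "0 \<le> Re (mat_trace (P * F))"
proof -
  have P: "P \<in> carrier_mat d d" "psd_fun d (entries P)"
    and F: "F \<in> carrier_mat d d" "psd_fun d (entries F)"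
    using assms by (simp_all add: psd_iff_psd_fun)
  show ?thesis
    using psd_fun_trace_prod_nonneg[OF P(2) F(2)]
    unfolding mat_trace_mult[OF P(1) F(1)] by (simp add: entries_def)
qed

lemma trace_mult_le_of_op_le:
  assumes "op_le d \<rho> (complex_of_real \<mu> \<cdot>\<^sub>m \<sigma>)" "psd d F"
  shows "Re (mat_trace (\<rho> * F)) \<le> \<mu> * Re (mat_trace (\<sigma> * F))"
proof -
  have \<rho>: "\<rho> \<in> carrier_mat d d" and \<mu>\<sigma>: "complex_of_real \<mu> \<cdot>\<^sub>m \<sigma> \<in> carrier_mat d d"
    and diff: "psd d (complex_of_real \<mu> \<cdot>\<^sub>m \<sigma> - \<rho>)"
    using assms(1) unfolding op_le_def by blast+
  have \<sigma>: "\<sigma> \<in> carrier_mat d d"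
    using \<mu>\<sigma> by (metis carrier_matD carrier_matI index_smult_mat(2,3))
  have F: "F \<in> carrier_mat d d"
    using assms(2) by (simp add: psd_iff_psd_fun)
  have "0 \<le> Re (mat_trace ((complex_of_real \<mu> \<cdot>\<^sub>m \<sigma> - \<rho>) * F))"
    using diff assms(2) by (rule trace_mult_psd_nonneg)
  also have "mat_trace ((complex_of_real \<mu> \<cdot>\<^sub>m \<sigma> - \<rho>) * F)
      = (\<Sum>a<d. \<Sum>b<d. (complex_of_real \<mu> * \<sigma> $$ (a, b) - \<rho> $$ (a, b)) * F $$ (b, a))"
    using \<rho> \<sigma> by (subst mat_trace_mult[OF _ F]) (auto intro!: sum.cong)
  also have "\<dots> = complex_of_real \<mu> * mat_trace (\<sigma> * F) - mat_trace (\<rho> * F)"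
    unfolding mat_trace_mult[OF \<sigma> F] mat_trace_mult[OF \<rho> F]
    by (simp add: algebra_simps sum_subtractf sum_distrib_left)
  finally show ?thesis by simp
qed

lemma sum_povm_trace_mult:
  assumes "A \<in> carrier_mat d d" "povm d Y F"
  shows "(\<Sum>y\<in>Y. mat_trace (A * F y)) = mat_trace A"
proof -
  have "(\<Sum>y\<in>Y. mat_trace (A * F y)) = (\<Sum>y\<in>Y. \<Sum>a<d. \<Sum>b<d. A $$ (a, b) * F y $$ (b, a))"
    using assms mat_trace_mult[OF assms(1)] by (simp add: povm_def psd_iff_psd_fun)
  also have "\<dots> = (\<Sum>a<d. \<Sum>b<d. A $$ (a, b) * (\<Sum>y\<in>Y. F y $$ (b, a)))"
    by (subst sum.swap) (simp add: sum.swap[of _ Y] sum_distrib_left)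
  also have "\<dots> = mat_trace A"
    using assms by (simp add: povm_def mat_trace_def if_distrib[of "\<lambda>x. _ * x"] cong: if_cong)
  finally show ?thesis .
qed

lemma supp_subset_quad_eq_0:
  assumes "psd d \<sigma>" "\<rho> \<in> carrier_mat d d" "supp_subset d \<rho> \<sigma>"
    and "Re (quad d (entries \<sigma>) u) = 0"
  shows "quad d (entries \<rho>) u = 0"
proof -
  have \<sigma>: "\<sigma> \<in> carrier_mat d d" "psd_fun d (entries \<sigma>)"
    using assms(1) by (simp_all add: psd_iff_psd_fun)
  have "\<sigma> *\<^sub>v vec d u = 0\<^sub>v d"
  proof (rule eq_vecI)
    fix k assume "k < dim_vec (0\<^sub>v d :: complex vec)"
    then have "k < d" by simp
    have "(\<sigma> *\<^sub>v vec d u) $ k = sesq d (entries \<sigma>) (basis_fun k) u"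
      using mult_mat_vec_index_sesq[OF \<sigma>(1) _ \<open>k < d\<close>, of "vec d u"]
      by (simp add: sesq_vec_index_vec)
    also have "\<dots> = 0"
      using \<sigma>(2) assms(4) by (rule psd_fun_sesq_eq_0)
    finally show "(\<sigma> *\<^sub>v vec d u) $ k = 0\<^sub>v d $ k"
      using \<open>k < d\<close> by simp
  qed (use \<sigma>(1) in simp)
  then have "\<rho> *\<^sub>v vec d u = 0\<^sub>v d"
    using assms(3) unfolding supp_subset_def by simp
  then show ?thesis
    using cscalar_prod_mult_mat_vec[OF assms(2), of "vec d u"] by (simp add: sesq_vec_index_vec)
qed

lemma psd_smult_minus:
  assumes "psd d \<rho>" "psd d \<sigma>"
    and "\<And>u. Re (quad d (entries \<rho>) u) \<le> \<mu> * Re (quad d (entries \<sigma>) u)"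
  shows "psd d (complex_of_real \<mu> \<cdot>\<^sub>m \<sigma> - \<rho>)"
proof -
  have \<rho>: "\<rho> \<in> carrier_mat d d" "psd_fun d (entries \<rho>)"
    and \<sigma>: "\<sigma> \<in> carrier_mat d d" "psd_fun d (entries \<sigma>)"
    using assms(1,2) by (simp_all add: psd_iff_psd_fun)
  let ?D = "complex_of_real \<mu> \<cdot>\<^sub>m \<sigma> - \<rho>"
  have entries_D: "entries ?D i j = complex_of_real \<mu> * entries \<sigma> i j - entries \<rho> i j"
    if "i < d" "j < d" for i j
    using that \<rho>(1) \<sigma>(1) by (simp add: entries_def)
  have "hermitian_fun d (entries ?D)"
    unfolding hermitian_fun_def
    using hermitian_funD[OF psd_funD(1)[OF \<rho>(2)]] hermitian_funD[OF psd_funD(1)[OF \<sigma>(2)]]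
    by (simp add: entries_D)
  moreover have "quad d (entries ?D) u
      = complex_of_real \<mu> * quad d (entries \<sigma>) u - quad d (entries \<rho>) u" for u
  proof -
    have "quad d (entries ?D) u
        = quad d (\<lambda>i j. complex_of_real \<mu> * entries \<sigma> i j - entries \<rho> i j) u"
      by (rule sesq_cong) (simp_all add: entries_D)
    then show ?thesis
      by (simp add: sesq_def algebra_simps sum_subtractf sum_distrib_left)
  qed
  ultimately have "psd_fun d (entries ?D)"
    using assms(3) by (simp add: psd_fun_def)
  moreover have "?D \<in> carrier_mat d d"
    using \<rho>(1) by (rule minus_carrier_mat)
  ultimately show ?thesis
    by (simp add: psd_iff_psd_fun)
qed

lemma op_le_smult_exists:
  assumes "psd d \<rho>" "psd d \<sigma>" "supp_subset d \<rho> \<sigma>"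
  shows "\<exists>\<mu>. op_le d \<rho> (complex_of_real \<mu> \<cdot>\<^sub>m \<sigma>)"
proof -
  have \<rho>: "\<rho> \<in> carrier_mat d d" "psd_fun d (entries \<rho>)"
    and \<sigma>: "\<sigma> \<in> carrier_mat d d" "psd_fun d (entries \<sigma>)"
    using assms(1,2) by (simp_all add: psd_iff_psd_fun)
  obtain \<mu> where "\<And>u. Re (quad d (entries \<rho>) u) \<le> \<mu> * Re (quad d (entries \<sigma>) u)"
    using psd_fun_dominates[OF \<sigma>(2), of "\<lambda>u. Re (quad d (entries \<rho>) u)"]
      psd_fun_quad_add_scale_le[OF \<rho>(2)] supp_subset_quad_eq_0[OF assms(2) \<rho>(1) assms(3)]
    by force
  then have "psd d (complex_of_real \<mu> \<cdot>\<^sub>m \<sigma> - \<rho>)"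
    using assms(1,2) by (rule psd_smult_minus[rotated 2])
  then show ?thesis
    using \<rho>(1) \<sigma>(1) by (auto simp: op_le_def)
qed

lemma psd_mixture:
  assumes "\<forall>x\<in>X. \<pi> x \<ge> 0" "\<forall>x\<in>X. psd d (\<rho> x)"
  shows "psd d (mixture d X \<pi> \<rho>)"
proof -
  have \<rho>: "psd_fun d (entries (\<rho> x))" if "x \<in> X" for x
    using assms(2) that by (simp add: psd_iff_psd_fun)
  have entries_mixture: "entries (mixture d X \<pi> \<rho>) i j
      = (\<Sum>x\<in>X. complex_of_real (\<pi> x) * entries (\<rho> x) i j)" if "i < d" "j < d" for i j
    using that by (simp add: mixture_def entries_def)
  have "hermitian_fun d (entries (mixture d X \<pi> \<rho>))"
    using hermitian_funD[OF psd_funD(1)[OF \<rho>]]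
    by (auto simp: hermitian_fun_def entries_mixture intro!: sum.cong)
  moreover have "quad d (entries (mixture d X \<pi> \<rho>)) u
      = (\<Sum>x\<in>X. complex_of_real (\<pi> x) * quad d (entries (\<rho> x)) u)" for u
  proof -
    have "quad d (entries (mixture d X \<pi> \<rho>)) u
        = quad d (\<lambda>i j. \<Sum>x\<in>X. complex_of_real (\<pi> x) * entries (\<rho> x) i j) u"
      by (rule sesq_cong) (simp_all add: entries_mixture)
    then show ?thesis
      by (simp add: sesq_def sum_distrib_left sum_distrib_right mult_ac sum.swap[of _ X])
  qed
  then have "0 \<le> Re (quad d (entries (mixture d X \<pi> \<rho>)) u)" for u
    using assms(1) psd_funD(2)[OF \<rho>] by (simp add: Re_sum sum_nonneg)
  ultimately show ?thesis
    by (simp add: psd_iff_psd_fun psd_fun_def mixture_def)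
qed

lemma density_op_mixture:
  assumes "\<pi> \<in> pmfs_on X" "\<forall>x\<in>X. density_op d (\<rho> x)"
  shows "density_op d (mixture d X \<pi> \<rho>)"
proof -
  have "mat_trace (mixture d X \<pi> \<rho>) = (\<Sum>x\<in>X. complex_of_real (\<pi> x) * (\<Sum>i<d. \<rho> x $$ (i, i)))"
    by (simp add: mixture_def mat_trace_def sum_distrib_left sum.swap[of _ X])
  also have "\<dots> = (\<Sum>x\<in>X. complex_of_real (\<pi> x) * mat_trace (\<rho> x))"
    using assms(2) by (auto simp: density_op_def psd_iff_psd_fun mat_trace_def intro!: sum.cong)
  also have "\<dots> = 1"
    using assms by (simp add: pmfs_on_def density_op_def flip: of_real_sum)
  finally show ?thesis
    using assms psd_mixture[of X \<pi> d \<rho>] by (simp add: density_op_def pmfs_on_def)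
qed

section \<open>The leakage bound\<close>

lemma trace_mult_le_Inf_op_le:
  assumes "psd d \<rho>" "psd d \<sigma>" "supp_subset d \<rho> \<sigma>" "psd d F"
  shows "Re (mat_trace (\<rho> * F))
    \<le> Inf {\<mu>. op_le d \<rho> (complex_of_real \<mu> \<cdot>\<^sub>m \<sigma>)} * Re (mat_trace (\<sigma> * F))"
proof -
  let ?S = "{\<mu>. op_le d \<rho> (complex_of_real \<mu> \<cdot>\<^sub>m \<sigma>)}"
  have bound: "Re (mat_trace (\<rho> * F)) \<le> \<mu> * Re (mat_trace (\<sigma> * F))" if "\<mu> \<in> ?S" for \<mu>
    using that assms(4) trace_mult_le_of_op_le by blast
  obtain \<mu>\<^sub>0 where "\<mu>\<^sub>0 \<in> ?S"
    using op_le_smult_exists[OF assms(1-3)] by blast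
  have "0 \<le> Re (mat_trace (\<sigma> * F))"
    using assms(2,4) by (rule trace_mult_psd_nonneg)
  then consider "Re (mat_trace (\<sigma> * F)) = 0" | "0 < Re (mat_trace (\<sigma> * F))"
    by linarith
  then show ?thesis
  proof cases
    case 1
    then show ?thesis
      using bound[OF \<open>\<mu>\<^sub>0 \<in> ?S\<close>] by simp
  next
    case 2
    have "Re (mat_trace (\<rho> * F)) / Re (mat_trace (\<sigma> * F)) \<le> Inf ?S"
    proof (rule cInf_greatest)
      show "?S \<noteq> {}"
        using \<open>\<mu>\<^sub>0 \<in> ?S\<close> by blast
      show "Re (mat_trace (\<rho> * F)) / Re (mat_trace (\<sigma> * F)) \<le> \<mu>" if "\<mu> \<in> ?S" for \<mu>
        using bound[OF that] 2 by (simp add: pos_divide_le_eq)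
    qed
    then show ?thesis
      using 2 by (simp add: pos_divide_le_eq)
  qed
qed

lemma one_le_sum_Max_trace_povm:
  assumes "finite X" "x\<^sub>0 \<in> X" "density_op d (\<rho> x\<^sub>0)" "povm d Y F"
  shows "1 \<le> (\<Sum>y\<in>Y. Max ((\<lambda>x. Re (mat_trace (\<rho> x * F y))) ` X))"
proof -
  have "1 = (\<Sum>y\<in>Y. Re (mat_trace (\<rho> x\<^sub>0 * F y)))"
    using sum_povm_trace_mult[of "\<rho> x\<^sub>0" d Y F] assms(3,4)
    by (simp add: density_op_def psd_iff_psd_fun flip: Re_sum)
  also have "\<dots> \<le> (\<Sum>y\<in>Y. Max ((\<lambda>x. Re (mat_trace (\<rho> x * F y))) ` X))"
    using assms(1,2) by (intro sum_mono Max_ge) auto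
  finally show ?thesis .
qed

lemma sum_Max_trace_povm_le:
  assumes "finite X" "X \<noteq> {}" "density_op d \<sigma>" "povm d Y F"
    and bound: "\<And>x G. x \<in> X \<Longrightarrow> psd d G \<Longrightarrow> Re (mat_trace (\<rho> x * G)) \<le> c x * Re (mat_trace (\<sigma> * G))"
  shows "(\<Sum>y\<in>Y. Max ((\<lambda>x. Re (mat_trace (\<rho> x * F y))) ` X)) \<le> Max (c ` X)"
proof -
  have "Re (mat_trace (\<rho> x * F y)) \<le> Max (c ` X) * Re (mat_trace (\<sigma> * F y))"
    if "x \<in> X" "y \<in> Y" for x y
  proof -
    have F: "psd d (F y)"
      using assms(4) that(2) by (simp add: povm_def)
    have "c x \<le> Max (c ` X)"
      using assms(1) that(1) by simp
    moreover have "0 \<le> Re (mat_trace (\<sigma> * F y))"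
      using trace_mult_psd_nonneg[OF _ F] assms(3) by (simp add: density_op_def)
    ultimately have "c x * Re (mat_trace (\<sigma> * F y)) \<le> Max (c ` X) * Re (mat_trace (\<sigma> * F y))"
      by (rule mult_right_mono)
    then show ?thesis
      using bound[OF that(1) F] by linarith
  qed
  then have "(\<Sum>y\<in>Y. Max ((\<lambda>x. Re (mat_trace (\<rho> x * F y))) ` X))
      \<le> (\<Sum>y\<in>Y. Max (c ` X) * Re (mat_trace (\<sigma> * F y)))"
    using assms(1,2) by (intro sum_mono) auto
  also have "\<dots> = Max (c ` X) * Re (\<Sum>y\<in>Y. mat_trace (\<sigma> * F y))"
    by (simp add: sum_distrib_left)
  also have "\<dots> = Max (c ` X)"
    using sum_povm_trace_mult[of \<sigma> d Y F] assms(3,4) by (simp add: density_op_def psd_iff_psd_fun)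
  finally show ?thesis .
qed

lemma max_quantum_leakage_le_Max_log:
  assumes "finite X" "X \<noteq> {}" "\<forall>x\<in>X. density_op d (\<rho> x)" "density_op d \<sigma>"
    and "\<And>x F. x \<in> X \<Longrightarrow> psd d F \<Longrightarrow> Re (mat_trace (\<rho> x * F)) \<le> c x * Re (mat_trace (\<sigma> * F))"
  shows "max_quantum_leakage d X \<rho> \<le> Max ((\<lambda>x. ereal (log 2 (c x))) ` X)"
proof -
  obtain x\<^sub>0 where "x\<^sub>0 \<in> X"
    using assms(2) by blast
  have "max_quantum_leakage d X \<rho> \<le> ereal (log 2 (Max (c ` X)))"
    unfolding max_quantum_leakage_def
  proof (rule SUP_least)
    fix YF
    assume "YF \<in> {(Y, F). povm d Y F}"
    then obtain Y F where YF: "YF = (Y, F)" and "povm d Y F"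
      by blast
    let ?T = "\<Sum>y\<in>Y. Max ((\<lambda>x. Re (mat_trace (\<rho> x * F y))) ` X)"
    have "1 \<le> ?T"
      using assms(1) \<open>x\<^sub>0 \<in> X\<close> bspec[OF assms(3) \<open>x\<^sub>0 \<in> X\<close>] \<open>povm d Y F\<close>
      by (rule one_le_sum_Max_trace_povm)
    moreover have "?T \<le> Max (c ` X)"
      using assms(1,2,4) \<open>povm d Y F\<close> assms(5) by (rule sum_Max_trace_povm_le)
    ultimately show "ereal (log 2 (\<Sum>y\<in>fst YF. Max ((\<lambda>x. Re (mat_trace (\<rho> x * snd YF y))) ` X)))
        \<le> ereal (log 2 (Max (c ` X)))"
      by (simp add: YF)
  qed
  also have "\<dots> \<le> Max ((\<lambda>x. ereal (log 2 (c x))) ` X)"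
  proof -
    have "Max (c ` X) \<in> c ` X"
      using assms(1,2) by (intro Max_in) auto
    then show ?thesis
      using assms(1) by (auto intro: Max_ge)
  qed
  finally show ?thesis .
qed

lemma max_quantum_leakage_le_Max_D_max:
  assumes "finite X" "X \<noteq> {}" "\<forall>x\<in>X. density_op d (\<rho> x)" "density_op d \<sigma>"
  shows "max_quantum_leakage d X \<rho> \<le> Max ((\<lambda>x. D_max d (\<rho> x) \<sigma>) ` X)"
proof (cases "\<forall>x\<in>X. supp_subset d (\<rho> x) \<sigma>")
  case True
  let ?c = "\<lambda>x. Inf {\<mu>. op_le d (\<rho> x) (complex_of_real \<mu> \<cdot>\<^sub>m \<sigma>)}"
  have "max_quantum_leakage d X \<rho> \<le> Max ((\<lambda>x. ereal (log 2 (?c x))) ` X)"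
  proof (rule max_quantum_leakage_le_Max_log[OF assms])
    show "Re (mat_trace (\<rho> x * F)) \<le> ?c x * Re (mat_trace (\<sigma> * F))"
      if "x \<in> X" "psd d F" for x F
      using that assms(3,4) True unfolding density_op_def
      by (intro trace_mult_le_Inf_op_le) blast+
  qed
  also have "(\<lambda>x. ereal (log 2 (?c x))) ` X = (\<lambda>x. D_max d (\<rho> x) \<sigma>) ` X"
    using True by (auto simp: D_max_def intro!: image_cong)
  finally show ?thesis .
next
  case False
  then obtain x where "x \<in> X" "D_max d (\<rho> x) \<sigma> = \<infinity>"
    by (auto simp: D_max_def)
  then have "Max ((\<lambda>x. D_max d (\<rho> x) \<sigma>) ` X) = \<infinity>"
    using assms(1) by (metis Max_ge finite_imageI imageI ereal_infty_less_eq(1))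
  then show ?thesis by simp
qed

theorem proposition1:
  fixes d :: nat and X :: "'x set" and p :: "'x \<Rightarrow> real" and \<rho> :: "'x \<Rightarrow> complex mat"
  assumes "finite X"
    and "\<forall>x\<in>X. p x > 0" and "(\<Sum>x\<in>X. p x) = 1"
    and "\<forall>x\<in>X. density_op d (\<rho> x)"
  shows "max_quantum_leakage d X \<rho>
     \<le> (INF \<pi> \<in> pmfs_on X. Max ((\<lambda>x. D_max d (\<rho> x) (mixture d X \<pi> \<rho>)) ` X))"
proof (rule INF_greatest)
  fix \<pi> assume "\<pi> \<in> pmfs_on X"
  \<comment> \<open>The prior \<open>p\<close> enters only here.\<close>
  have "X \<noteq> {}"
    using assms(3) by auto
  moreover have "density_op d (mixture d X \<pi> \<rho>)"
    using \<open>\<pi> \<in> pmfs_on X\<close> assms(4) by (rule density_op_mixture)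
  ultimately show "max_quantum_leakage d X \<rho> \<le> Max ((\<lambda>x. D_max d (\<rho> x) (mixture d X \<pi> \<rho>)) ` X)"
    by (rule max_quantum_leakage_le_Max_D_max[OF assms(1) _ assms(4)])
qed

end
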